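(* Let $\mathfrak A=(S_\Omega,S_{\mathcal E},\Omega,\mathcal E,B,u)$ be an accessible GPT fragment with $d_\Omega=\dim S_\Omega$ and $d_{\mathcal E}=\dim S_{\mathcal E}$. If $\mathfrak A$ admits a simplicial-cone embedding, then it admits a simplicial-cone embedding $(\Lambda,\tau_\Omega,\tau_{\mathcal E})$ with $|\Lambda|\le d_\Omega d_{\mathcal E}$. If moreover for every $e\in\mathcal E$ there exists $e^\perp\in\mathcal E$ with $e+e^\perp=u$, then $\mathfrak A$ admits a simplex embedding with at most $d_\Omega d_{\mathcal E}$ ontic states; in particular, when $S_\Omega=S_{\mathcal E}$ has dimension $d$, at most $d^2$ ontic states.
   Context: An accessible GPT fragment $\mathfrak A=(S_\Omega,S_{\mathcal E},\Omega,\mathcal E,B,u)$ consists of: finite-dimensional real vector spaces $S_\Omega$ and $S_{\mathcal E}$; a set $\Omega\subset S_\Omega$ of states which spans $S_\Omega$; a set $\mathcal E\subset S_{\mathcal E}^*$ of effects which spans $S_{\mathcal E}^*$; a bilinear form $B:S_{\mathcal E}^*\times S_\Omega\to\mathbb R$ (the probability rule); and a unit effect $u\in\mathcal E$. The convex hulls of $\Omega$ and $\mathcal E$ have finitely many extreme points. A simplicial-cone embedding of $\mathfrak A$ is a finite set $\Lambda$ (the ontic states) together with linear maps $\tau_\Omega:S_\Omega\to\mathbb R^\Lambda$ and $\tau_{\mathcal E}:S_{\mathcal E}^*\to\mathbb R^\Lambda$ such that $\tau_\Omega(s)$ is entrywise nonnegative for all $s\in\Omega$, $\tau_{\mathcal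 E}(e)$ is entrywise nonnegative for all $e\in\mathcal E$, and $B(w,v)=\tau_{\mathcal E}(w)\cdot\tau_\Omega(v)$ for all $w\in S_{\mathcal E}^*$, $v\in S_\Omega$. A simplex embedding is a simplicial-cone embedding which additionally satisfies $\tau_{\mathcal E}(u)=(1,1,\dots,1)$. *)

theory Defs
  imports "HOL-Analysis.Analysis"
begin

text \<open>S_Omega is modelled by the finite-dimensional real vector space type 'a,
  the dual space S_E^* by the type 'e (dim S_E = dim S_E^* = DIM('e)).
  A finite set of ontic states Lambda is modelled (up to bijection) by {..<n};
  vectors in R^Lambda are functions nat => real restricted to indices i < n.\<close>

definition accessible_GPT_fragment ::
  "'a::euclidean_space set \<Rightarrow> 'e::euclidean_space set \<Rightarrow> ('e \<Rightarrow> 'a \<Rightarrow> real) \<Rightarrow> 'e \<Rightarrow> bool" where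
  "accessible_GPT_fragment \<Omega> E B u \<longleftrightarrow>
     span \<Omega> = UNIV \<and> span E = UNIV \<and> bilinear B \<and> u \<in> E \<and>
     finite {x. x extreme_point_of (convex hull \<Omega>)} \<and>
     finite {x. x extreme_point_of (convex hull E)}"

definition simplicial_cone_embedding ::
  "'a::euclidean_space set \<Rightarrow> 'e::euclidean_space set \<Rightarrow> ('e \<Rightarrow> 'a \<Rightarrow> real)
    \<Rightarrow> nat \<Rightarrow> ('a \<Rightarrow> nat \<Rightarrow> real) \<Rightarrow> ('e \<Rightarrow> nat \<Rightarrow> real) \<Rightarrow> bool" where
  "simplicial_cone_embedding \<Omega> E B n \<tau>\<Omega> \<tau>E \<longleftrightarrow>
     (\<forall>i<n. linear (\<lambda>v. \<tau>\<Omega> v i)) \<and> (\<forall>i<n. linear (\<lambda>w. \<tau>E w i)) \<and>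
     (\<forall>s\<in>\<Omega>. \<forall>i<n. 0 \<le> \<tau>\<Omega> s i) \<and>
     (\<forall>e\<in>E. \<forall>i<n. 0 \<le> \<tau>E e i) \<and>
     (\<forall>w v. B w v = (\<Sum>i<n. \<tau>E w i * \<tau>\<Omega> v i))"

definition simplex_embedding ::
  "'a::euclidean_space set \<Rightarrow> 'e::euclidean_space set \<Rightarrow> ('e \<Rightarrow> 'a \<Rightarrow> real) \<Rightarrow> 'e
    \<Rightarrow> nat \<Rightarrow> ('a \<Rightarrow> nat \<Rightarrow> real) \<Rightarrow> ('e \<Rightarrow> nat \<Rightarrow> real) \<Rightarrow> bool" where
  "simplex_embedding \<Omega> E B u n \<tau>\<Omega> \<tau>E \<longleftrightarrow>
     simplicial_cone_embedding \<Omega> E B n \<tau>\<Omega> \<tau>E \<and> (\<forall>i<n. \<tau>E u i = 1)"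

end

theory Submission
  imports Defs "HOL-Library.Function_Algebras"
begin

(* A simplicial-cone embedding writes B as a sum of n rank-one bilinear forms tE_i \<otimes> tO_i,
   all living in a space of dimension d_E d_\<Omega>. If n exceeds this dimension there is a relation
   \<Sum> l_i tE_i \<otimes> tO_i = 0 with some l_i > 0; for k maximising l, replacing tE_i by
   (1 - l_i / l_k) tE_i keeps every effect nonnegative and leaves B unchanged, but kills the k-th
   ontic state, which is then dropped (a Caratheodory-type reduction).
   With complements, an ontic state on which tE u vanishes is annihilated by every effect, because
   e + e\<^sup>\<bottom> = u with both terms nonnegative and the effects span. Once all such states are dropped,
   dividing tE by tE u and multiplying t\<Omega> by it normalises the unit effect to (1, ..., 1). *)

lemma sum_apply: "finite A \<Longrightarrow> sum f A x = (\<Sum>a\<in>A. f a x)"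
  by (induction A rule: finite_induct) auto

lemma finitely_supported_family_dependent:
  fixes f :: "nat \<Rightarrow> 'p \<Rightarrow> real"
  assumes P: "finite P" "card P < n" and supp: "\<And>i x. x \<notin> P \<Longrightarrow> f i x = 0"
  shows "\<exists>l. (\<exists>i<n. l i \<noteq> 0) \<and> (\<forall>x. (\<Sum>i<n. l i * f i x) = 0)"
proof (cases "inj_on f {..<n}")
  case False
  then obtain i j where ij: "i < n" "j < n" "i \<noteq> j" "f i = f j"
    unfolding inj_on_def by auto
  define l where "l k = (if k = i then 1 else if k = j then -1 else 0 :: real)" for k
  have "(\<Sum>k<n. l k * f k x) = (\<Sum>k\<in>{i,j}. l k * f k x)" for x
    by (rule sum.mono_neutral_right) (use ij in \<open>auto simp: l_def\<close>)
  then have "\<forall>x. (\<Sum>k<n. l k * f k x) = 0"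
    using ij by (simp add: l_def)
  then show ?thesis
    using ij by (intro exI[of _ l]) (auto simp: l_def)
next
  case True
  \<comment> \<open>Real-valued functions on \<open>'p\<close> form no \<open>real_vector\<close> instance, so the vector space is interpreted by hand.\<close>
  define scale where "scale c g x = c * g x" for c :: real and g :: "'p \<Rightarrow> real" and x
  interpret fun_space: vector_space scale
    by unfold_locales (auto simp: scale_def fun_eq_iff algebra_simps)
  define delta where "delta p x = (if x = p then 1 else 0 :: real)" for p x :: 'p
  have card_family: "card (f ` {..<n}) = n"
    using True by (simp add: card_image)
  have "f ` {..<n} \<subseteq> fun_space.span (delta ` P)"
  proof clarify
    fix i
    have "f i = (\<Sum>p\<in>P. scale (f i p) (delta p))"
      using P supp by (auto simp: fun_eq_iff sum_apply scale_def delta_def if_distrib cong: if_cong)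
    also have "\<dots> \<in> fun_space.span (delta ` P)"
      by (intro fun_space.span_sum fun_space.span_scale fun_space.span_base) auto
    finally show "f i \<in> fun_space.span (delta ` P)" .
  qed
  then have "fun_space.dependent (f ` {..<n})"
    using fun_space.independent_span_bound[of "delta ` P"] card_image_le[of P delta] P card_family
    by fastforce
  then obtain c where c: "\<exists>g\<in>f ` {..<n}. c g \<noteq> 0" "(\<Sum>g\<in>f ` {..<n}. scale (c g) g) = 0"
    using fun_space.dependent_finite[of "f ` {..<n}"] by auto
  have "(\<Sum>i<n. c (f i) * f i x) = (\<Sum>g\<in>f ` {..<n}. scale (c g) g) x" for x
    by (simp add: sum.reindex[OF True] sum_apply scale_def)
  then show ?thesis
    using c by (intro exI[of _ "c \<circ> f"]) auto
qed

lemma bilinear_weighted_sum_of_products: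
  fixes tE :: "'e::real_vector \<Rightarrow> nat \<Rightarrow> real" and tO :: "'a::real_vector \<Rightarrow> nat \<Rightarrow> real"
  assumes "\<forall>i<n. linear (\<lambda>w. tE w i)" and "\<forall>i<n. linear (\<lambda>v. tO v i)"
  shows "bilinear (\<lambda>w v. \<Sum>i<n. l i * tE w i * tO v i)"
proof -
  have "linear (\<lambda>w. l i * tE w i * tO v i)" "linear (\<lambda>v. l i * tE w i * tO v i)"
    if "i < n" for i w v
    using assms that by (auto simp: linear_iff algebra_simps)
  then show ?thesis
    unfolding bilinear_def by (auto intro!: linear_compose_sum)
qed

lemma sum_of_products_positive_dependence:
  fixes tE :: "'e::euclidean_space \<Rightarrow> nat \<Rightarrow> real" and tO :: "'a::euclidean_space \<Rightarrow> nat \<Rightarrow> real"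
  assumes lin: "\<forall>i<n. linear (\<lambda>w. tE w i)" "\<forall>i<n. linear (\<lambda>v. tO v i)"
    and many: "DIM('e) * DIM('a) < n"
  shows "\<exists>l. (\<exists>i<n. 0 < l i) \<and> (\<forall>w v. (\<Sum>i<n. l i * tE w i * tO v i) = 0)"
proof -
  define f where "f i x = (if x \<in> Basis \<times> Basis then tE (fst x) i * tO (snd x) i else 0)"
    for i and x :: "'e \<times> 'a"
  obtain l where "\<exists>i<n. l i \<noteq> 0" and l_basis: "\<forall>x. (\<Sum>i<n. l i * f i x) = 0"
    using finitely_supported_family_dependent[of "Basis \<times> Basis" n f] many
    by (auto simp: f_def card_cartesian_product)
  then obtain i where i: "i < n" "l i \<noteq> 0" by blast
  have "(\<lambda>w v. \<Sum>i<n. l i * tE w i * tO v i) = (\<lambda>w v. 0)"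
  proof (rule bilinear_eq_stdbasis)
    show "bilinear (\<lambda>w v. \<Sum>i<n. l i * tE w i * tO v i)"
      using lin by (rule bilinear_weighted_sum_of_products)
    show "bilinear (\<lambda>(w::'e) (v::'a). 0::real)"
      by (simp add: bilinear_def linear_zero)
    show "(\<Sum>i<n. l i * tE b i * tO b' i) = 0" if "b \<in> Basis" "b' \<in> Basis" for b b'
      using l_basis[rule_format, of "(b, b')"] that by (simp add: f_def mult.assoc)
  qed
  then have "(\<Sum>j<n. sgn (l i) * l j * tE w j * tO v j) = 0" for w v
    by (simp add: fun_eq_iff mult.assoc flip: sum_distrib_left)
  moreover have "0 < sgn (l i) * l i"
    using i(2) by (simp add: sgn_mult_self_eq zero_less_mult_iff sgn_if)
  ultimately show ?thesis
    using i(1) by (intro exI[of _ "\<lambda>j. sgn (l i) * l j"]) blast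
qed

lemma simplicial_cone_embedding_drop_state:
  assumes emb: "simplicial_cone_embedding \<Omega> E B n tO tE" and k: "k < n"
    and null: "\<forall>w v. tE w k * tO v k = 0"
  defines "\<sigma> \<equiv> Transposition.transpose k (n - 1)"
  shows "simplicial_cone_embedding \<Omega> E B (n - 1) (\<lambda>v j. tO v (\<sigma> j)) (\<lambda>w j. tE w (\<sigma> j))"
proof -
  have \<sigma>_less: "\<sigma> j < n" if "j < n - 1" for j
    using k that by (auto simp: \<sigma>_def Transposition.transpose_def)
  have "B w v = (\<Sum>j<n - 1. tE w (\<sigma> j) * tO v (\<sigma> j))" for w v
  proof -
    have "B w v = (\<Sum>i<n. tE w i * tO v i)"
      using emb by (simp add: simplicial_cone_embedding_def)
    also have "\<dots> = (\<Sum>j<Suc (n - 1). tE w (\<sigma> j) * tO v (\<sigma> j))"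
      by (rule sum.reindex_bij_witness[where i=\<sigma> and j=\<sigma>]) (use k in \<open>auto simp: \<sigma>_def Transposition.transpose_def\<close>)
    also have "\<dots> = (\<Sum>j<n - 1. tE w (\<sigma> j) * tO v (\<sigma> j))"
      using null[rule_format, of w v] by (simp add: \<sigma>_def)
    finally show ?thesis .
  qed
  then show ?thesis
    using emb \<sigma>_less by (simp add: simplicial_cone_embedding_def)
qed

lemma simplicial_cone_embedding_shift:
  assumes emb: "simplicial_cone_embedding \<Omega> E B n tO tE"
    and dep: "\<forall>w v. (\<Sum>i<n. l i * tE w i * tO v i) = 0"
    and k: "0 < l k" "\<forall>i<n. l i \<le> l k"
  shows "simplicial_cone_embedding \<Omega> E B n tO (\<lambda>w i. (1 - l i / l k) * tE w i)"
  unfolding simplicial_cone_embedding_def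
proof (intro conjI allI impI ballI)
  fix i assume "i < n"
  then have "linear (\<lambda>w. tE w i)"
    using emb by (simp add: simplicial_cone_embedding_def)
  then show "linear (\<lambda>w. (1 - l i / l k) * tE w i)"
    by (simp add: linear_iff distrib_left mult.left_commute)
next
  fix e i assume "e \<in> E" "i < n"
  moreover have "0 \<le> 1 - l i / l k"
    using k \<open>i < n\<close> by simp
  ultimately show "0 \<le> (1 - l i / l k) * tE e i"
    using emb by (simp add: simplicial_cone_embedding_def)
next
  fix w v
  have "(\<Sum>i<n. (1 - l i / l k) * tE w i * tO v i)
      = (\<Sum>i<n. tE w i * tO v i) - (\<Sum>i<n. l i * tE w i * tO v i) / l k"
    by (simp add: algebra_simps sum_subtractf sum_divide_distrib)
  then show "B w v = (\<Sum>i<n. (1 - l i / l k) * tE w i * tO v i)"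
    using emb dep by (simp add: simplicial_cone_embedding_def)
qed (use emb in \<open>auto simp: simplicial_cone_embedding_def\<close>)

lemma simplicial_cone_embedding_remove_state:
  fixes \<Omega> :: "'a::euclidean_space set" and E :: "'e::euclidean_space set"
  assumes emb: "simplicial_cone_embedding \<Omega> E B n tO tE" and many: "DIM('a) * DIM('e) < n"
  shows "\<exists>tO' tE'. simplicial_cone_embedding \<Omega> E B (n - 1) tO' tE'"
proof -
  obtain l where pos: "\<exists>i<n. 0 < l i" and dep: "\<forall>w v. (\<Sum>i<n. l i * tE w i * tO v i) = 0"
    using sum_of_products_positive_dependence[of n tE tO] emb many
    by (auto simp: simplicial_cone_embedding_def mult.commute)
  have "Max (l ` {..<n}) \<in> l ` {..<n}"
    using pos by (intro Max_in) auto
  then obtain k where k: "k < n" "l k = Max (l ` {..<n})"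
    by auto
  have max: "\<forall>i<n. l i \<le> l k"
    using k(2) by simp
  with pos have "0 < l k"
    by force
  from simplicial_cone_embedding_drop_state[OF simplicial_cone_embedding_shift[OF emb dep this max] k(1)]
  show ?thesis
    using \<open>0 < l k\<close> by auto
qed

lemma simplicial_cone_embedding_dimension_bound:
  fixes \<Omega> :: "'a::euclidean_space set" and E :: "'e::euclidean_space set"
  assumes "simplicial_cone_embedding \<Omega> E B n tO tE"
  shows "\<exists>n' tO' tE'. simplicial_cone_embedding \<Omega> E B n' tO' tE' \<and> n' \<le> DIM('a) * DIM('e)"
  using assms
proof (induction n arbitrary: tO tE rule: less_induct)
  case (less n)
  show ?case
  proof (cases "DIM('a) * DIM('e) < n")
    case True
    then obtain tO' tE' where "simplicial_cone_embedding \<Omega> E B (n - 1) tO' tE'"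
      using simplicial_cone_embedding_remove_state[OF less.prems] by blast
    with True show ?thesis
      using less.IH[of "n - 1"] by simp
  qed (use less.prems in \<open>auto simp: not_less\<close>)
qed

lemma linear_vanishing_at_unit_eq_0:
  fixes t :: "'e::real_vector \<Rightarrow> real"
  assumes lin: "linear t" and nonneg: "\<forall>e\<in>E. 0 \<le> t e"
    and compl: "\<forall>e\<in>E. \<exists>e'\<in>E. e + e' = u" and span: "span E = UNIV" and "t u = 0"
  shows "t w = 0"
proof -
  have "t e = 0" if e: "e \<in> E" for e
  proof -
    obtain e' where "e' \<in> E" "e + e' = u"
      using compl e by blast
    then have "t e + t e' = 0"
      using \<open>t u = 0\<close> linear_add[OF lin, of e e'] by simp
    moreover have "0 \<le> t e" "0 \<le> t e'"
      using nonneg e \<open>e' \<in> E\<close> by auto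
    ultimately show ?thesis
      by linarith
  qed
  moreover have "w \<in> span E"
    using span by simp
  ultimately show ?thesis
    by (rule real_vector.linear_eq_0_on_span[OF lin])
qed

lemma simplicial_cone_embedding_unit_positive:
  fixes E :: "'e::euclidean_space set"
  assumes compl: "\<forall>e\<in>E. \<exists>e'\<in>E. e + e' = u" and "u \<in> E" and "span E = UNIV"
    and "simplicial_cone_embedding \<Omega> E B n tO tE"
  shows "\<exists>n' tO' tE'. simplicial_cone_embedding \<Omega> E B n' tO' tE' \<and> n' \<le> n \<and> (\<forall>i<n'. 0 < tE' u i)"
  using assms(4)
proof (induction n arbitrary: tO tE rule: less_induct)
  case (less n)
  have lin: "\<forall>i<n. linear (\<lambda>w. tE w i)" and nonneg: "\<forall>e\<in>E. \<forall>i<n. 0 \<le> tE e i"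
    using less.prems by (auto simp: simplicial_cone_embedding_def)
  show ?case
  proof (cases "\<exists>k<n. tE u k = 0")
    case True
    then obtain k where k: "k < n" "tE u k = 0"
      by blast
    have "tE w k = 0" for w
      using linear_vanishing_at_unit_eq_0[of "\<lambda>w. tE w k"] lin nonneg compl assms(3) k by blast
    then obtain tO' tE' where "simplicial_cone_embedding \<Omega> E B (n - 1) tO' tE'"
      using simplicial_cone_embedding_drop_state[OF less.prems k(1)] by auto
    moreover from k(1) have "n - 1 < n"
      by simp
    ultimately obtain n' tO'' tE'' where
      "simplicial_cone_embedding \<Omega> E B n' tO'' tE''" "n' \<le> n - 1" "\<forall>i<n'. 0 < tE'' u i"
      using less.IH by blast
    then show ?thesis
      by (intro exI[of _ n'] exI[of _ tO''] exI[of _ tE'']) simp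
  next
    case False
    with nonneg \<open>u \<in> E\<close> have "\<forall>i<n. 0 < tE u i"
      by (auto simp: less_le)
    with less.prems show ?thesis
      by blast
  qed
qed

lemma simplex_embedding_normalize:
  assumes emb: "simplicial_cone_embedding \<Omega> E B n tO tE" and pos: "\<forall>i<n. 0 < tE u i"
  shows "simplex_embedding \<Omega> E B u n (\<lambda>v i. tE u i * tO v i) (\<lambda>w i. tE w i / tE u i)"
  unfolding simplex_embedding_def simplicial_cone_embedding_def
proof (intro conjI allI impI ballI)
  fix i assume i: "i < n"
  then have "linear (\<lambda>w. tE w i)" "linear (\<lambda>v. tO v i)"
    using emb by (auto simp: simplicial_cone_embedding_def)
  then show "linear (\<lambda>w. tE w i / tE u i)" "linear (\<lambda>v. tE u i * tO v i)"
    by (simp_all add: linear_iff distrib_left mult.left_commute add_divide_distrib)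
  show "tE u i / tE u i = 1"
    using pos[rule_format, OF i] by simp
next
  fix s i assume "s \<in> \<Omega>" "i < n"
  then show "0 \<le> tE u i * tO s i"
    using emb pos by (simp add: simplicial_cone_embedding_def less_imp_le)
next
  fix e i assume "e \<in> E" "i < n"
  then show "0 \<le> tE e i / tE u i"
    using emb pos by (simp add: simplicial_cone_embedding_def less_imp_le)
next
  fix w v
  have "(\<Sum>i<n. tE w i / tE u i * (tE u i * tO v i)) = (\<Sum>i<n. tE w i * tO v i)"
    using pos by (intro sum.cong) auto
  then show "B w v = (\<Sum>i<n. tE w i / tE u i * (tE u i * tO v i))"
    using emb by (simp add: simplicial_cone_embedding_def)
qed

theorem mainTheorem5:
  fixes \<Omega> :: "'a::euclidean_space set" and E :: "'e::euclidean_space set"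
    and B :: "'e \<Rightarrow> 'a \<Rightarrow> real" and u :: 'e
  assumes "accessible_GPT_fragment \<Omega> E B u"
    and "\<exists>n \<tau>\<Omega> \<tau>E. simplicial_cone_embedding \<Omega> E B n \<tau>\<Omega> \<tau>E"
  shows "(\<exists>n \<tau>\<Omega> \<tau>E. simplicial_cone_embedding \<Omega> E B n \<tau>\<Omega> \<tau>E \<and> n \<le> DIM('a) * DIM('e))
    \<and> ((\<forall>e\<in>E. \<exists>e'\<in>E. e + e' = u) \<longrightarrow>
         (\<exists>n \<tau>\<Omega> \<tau>E. simplex_embedding \<Omega> E B u n \<tau>\<Omega> \<tau>E \<and> n \<le> DIM('a) * DIM('e)))"
proof (intro conjI impI)
  obtain n tO tE where small: "simplicial_cone_embedding \<Omega> E B n tO tE" "n \<le> DIM('a) * DIM('e)"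
    using assms(2) simplicial_cone_embedding_dimension_bound by blast
  then show "\<exists>n \<tau>\<Omega> \<tau>E. simplicial_cone_embedding \<Omega> E B n \<tau>\<Omega> \<tau>E \<and> n \<le> DIM('a) * DIM('e)"
    by blast
  assume "\<forall>e\<in>E. \<exists>e'\<in>E. e + e' = u"
  moreover have "u \<in> E" "span E = UNIV"
    using assms(1) by (auto simp: accessible_GPT_fragment_def)
  ultimately obtain n' tO' tE' where emb: "simplicial_cone_embedding \<Omega> E B n' tO' tE'"
    and "n' \<le> n" and pos: "\<forall>i<n'. 0 < tE' u i"
    using simplicial_cone_embedding_unit_positive[OF _ _ _ small(1)] by blast
  moreover from \<open>n' \<le> n\<close> small(2) have "n' \<le> DIM('a) * DIM('e)"
    by linarith
  ultimately show "\<exists>n \<tau>\<Omega> \<tau>E. simplex_embedding \<Omega> E B u n \<tau>\<Omega> \<tau>E \<and> n \<le> DIM('a) * DIM('e)"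
    using simplex_embedding_normalize[OF emb pos] by blast
qed

end
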